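(* Let $A,B:[0,1]\to\mathbb{R}$ be smooth functions and consider the Abel equation $$\frac{dx}{dt}=A(t)x^3+B(t)x^2,\qquad (t,x)\in[0,1]\times\mathbb{R}.$$ Assume that there exist two real numbers $a$ and $b$ such that the function $aA(t)+bB(t)$ does not vanish identically on $[0,1]$ and does not change sign on $[0,1]$. Then the equation has at most one non-zero periodic orbit. Furthermore, when this periodic orbit exists, it is hyperbolic.
   Context: A periodic orbit of the equation is a solution $x(t)$ defined on all of $[0,1]$ with $x(0)=x(1)$; $x\equiv 0$ is always one, and a non-zero periodic orbit is one different from $x\equiv0$. The Poincaré map is $\Pi(x_0)=x(1;x_0)$, where $x(t;x_0)$ is the solution with $x(0;x_0)=x_0$ (defined for those $x_0$ whose solution exists on $[0,1]$). A periodic orbit with initial condition $x_0$ is hyperbolic if $\Pi'(x_0)\neq 1$. *)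

theory Defs
  imports "HOL-Analysis.Analysis"
begin

definition smooth01 :: "(real \<Rightarrow> real) \<Rightarrow> bool" where
  "smooth01 f \<longleftrightarrow> (\<exists>D :: nat \<Rightarrow> real \<Rightarrow> real. D 0 = f \<and>
      (\<forall>n. \<forall>t\<in>{0..1}. (D n has_real_derivative D (Suc n) t) (at t within {0..1})))"

definition abel_sol :: "(real \<Rightarrow> real) \<Rightarrow> (real \<Rightarrow> real) \<Rightarrow> (real \<Rightarrow> real) \<Rightarrow> bool" where
  "abel_sol A B x \<longleftrightarrow> (\<forall>t\<in>{0..1}.
      (x has_real_derivative (A t * (x t)^3 + B t * (x t)^2)) (at t within {0..1}))"

definition periodic_orbit :: "(real \<Rightarrow> real) \<Rightarrow> (real \<Rightarrow> real) \<Rightarrow> (real \<Rightarrow> real) \<Rightarrow> bool" where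
  "periodic_orbit A B x \<longleftrightarrow> abel_sol A B x \<and> x 0 = x 1"

definition nonzero_orbit :: "(real \<Rightarrow> real) \<Rightarrow> bool" where
  "nonzero_orbit x \<longleftrightarrow> (\<exists>t\<in>{0..1}. x t \<noteq> 0)"

definition poincare :: "(real \<Rightarrow> real) \<Rightarrow> (real \<Rightarrow> real) \<Rightarrow> real \<Rightarrow> real" where
  "poincare A B x0 = (THE y. \<exists>x. abel_sol A B x \<and> x 0 = x0 \<and> x 1 = y)"

definition hyperbolic :: "(real \<Rightarrow> real) \<Rightarrow> (real \<Rightarrow> real) \<Rightarrow> real \<Rightarrow> bool" where
  "hyperbolic A B x0 \<longleftrightarrow> (\<exists>d. (poincare A B has_real_derivative d) (at x0) \<and> d \<noteq> 1)"

end

(* Assume a A + b B >= 0 on [0, 1] (otherwise replace (a, b) by (-a, -b)). A nonzero periodic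
   orbit x never vanishes, and along it the function (b x - a) exp (- int_0^t A x^2) has derivative
   x^2 (a A + b B) exp (- int_0^t A x^2) >= 0, which is not identically zero. Comparing its values at
   0 and 1 shows that int_0^1 A x^2 <> 0 and that b x - a has constant sign.
   If S is a primitive of 1 / (v^2 (b v - a)), then for two different nonzero periodic orbits x, y the
   derivative of S (x) - S (y) is (a A + b B) (y - x) / ((b x - a) (b y - a)); this has constant sign
   and is not identically zero, contradicting S (x (0)) - S (y (0)) = S (x (1)) - S (y (1)).
   The derivative of the Poincare map at x (0) is exp (int_0^1 (3 A x^2 + 2 B x)), and
   int_0^1 (A x^2 + B x) = 0 since x (t) = x (0) exp (int_0^t (A x^2 + B x)); hence it equals
   exp (int_0^1 A x^2) <> 1. Its differentiability needs solutions through all nearby initial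
   values, which the contraction principle provides for a globally Lipschitz truncation of the
   equation. *)

theory Submission
  imports Defs
begin

section \<open>Calculus on compact intervals\<close>

lemma deriv_nonneg_imp_mono_Icc:
  fixes f f' :: "real \<Rightarrow> real"
  assumes deriv: "\<And>t. t \<in> {a..b} \<Longrightarrow> (f has_real_derivative f' t) (at t within {a..b})"
    and nonneg: "\<And>t. t \<in> {a..b} \<Longrightarrow> f' t \<ge> 0"
    and "a \<le> s" "s \<le> u" "u \<le> b"
  shows "f s \<le> f u"
proof (rule DERIV_nonneg_imp_increasing_open[OF \<open>s \<le> u\<close>])
  fix t assume "s < t" "t < u"
  then have t: "t \<in> {a..b}" and "at t within {a..b} = at t"
    using assms(3-5) by (auto intro: at_within_Icc_at)
  with deriv[OF t] nonneg[OF t] show "\<exists>y. DERIV f t :> y \<and> 0 \<le> y"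
    by auto
next
  have "continuous_on {a..b} f"
    using deriv by (rule DERIV_continuous_on)
  then show "continuous_on {s..u} f"
    by (rule continuous_on_subset) (use assms(3-5) in auto)
qed

lemma deriv_nonneg_imp_less_Icc:
  fixes f f' :: "real \<Rightarrow> real"
  assumes deriv: "\<And>t. t \<in> {a..b} \<Longrightarrow> (f has_real_derivative f' t) (at t within {a..b})"
    and nonneg: "\<And>t. t \<in> {a..b} \<Longrightarrow> f' t \<ge> 0"
    and "a < b" and t0: "t0 \<in> {a..b}" "f' t0 \<noteq> 0"
  shows "f a < f b"
proof (rule ccontr)
  assume "\<not> f a < f b"
  have const: "f t = f a" if "t \<in> {a..b}" for t
  proof -
    have "f a \<le> f t" "f t \<le> f b"
      using deriv_nonneg_imp_mono_Icc[OF deriv nonneg] that by auto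
    with \<open>\<not> f a < f b\<close> show ?thesis
      by linarith
  qed
  have "((\<lambda>t. f a) has_real_derivative 0) (at t0 within {a..b})"
    by simp
  then have "(f has_real_derivative 0) (at t0 within {a..b})"
    by (rule has_field_derivative_transform_within[where d=1]) (use t0 in \<open>auto intro: const[symmetric]\<close>)
  then have "f' t0 = 0"
    using vector_derivative_unique_within_closed_interval[of a b t0 f "f' t0" 0] \<open>a < b\<close> t0(1) deriv[OF t0(1)]
    by (simp add: has_real_derivative_iff_has_vector_derivative)
  with t0(2) show False ..
qed

lemma linear_ode_solution_Icc:
  fixes w g :: "real \<Rightarrow> real"
  assumes deriv: "\<And>t. t \<in> {a..b} \<Longrightarrow> (w has_real_derivative w t * g t) (at t within {a..b})"
    and g: "continuous_on {a..b} g" and t: "t \<in> {a..b}"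
  shows "w t = w a * exp (integral {a..t} g)"
proof -
  define G where "G t = integral {a..t} g" for t
  have "((\<lambda>t. w t * exp (- G t)) has_real_derivative 0) (at t within {a..b})"
    if "t \<in> {a..b}" for t
  proof -
    have "(G has_real_derivative g t) (at t within {a..b})"
      unfolding G_def by (rule integral_has_real_derivative[OF g that])
    from DERIV_mult[OF deriv[OF that] DERIV_chain2[OF DERIV_exp DERIV_minus[OF this]]]
    show ?thesis
      by (simp add: algebra_simps)
  qed
  then obtain c where "\<forall>t\<in>{a..b}. w t * exp (- G t) = c"
    using has_field_derivative_zero_constant[of "{a..b}" "\<lambda>t. w t * exp (- G t)"] by blast
  then have "w t * exp (- G t) = w a * exp (- G a)"
    using t by auto
  moreover have "G a = 0"
    by (simp add: G_def)
  ultimately show ?thesis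
    by (simp add: G_def exp_minus field_simps)
qed

lemma continuous_on_Icc_abs_bound:
  fixes f :: "real \<Rightarrow> real"
  assumes "continuous_on {a..b} f"
  obtains M where "\<And>t. t \<in> {a..b} \<Longrightarrow> \<bar>f t\<bar> \<le> M"
  using continuous_on_compact_bound[OF compact_Icc assms] by (metis real_norm_def)

lemma integral_exp_weighted_bound:
  fixes g :: "real \<Rightarrow> real"
  assumes g: "g integrable_on {0..u}" and "u \<ge> 0" "K > 0"
    and bound: "\<And>s. s \<in> {0..u} \<Longrightarrow> \<bar>g s\<bar> \<le> c * exp (K * s)"
  shows "exp (- (K * u)) * \<bar>integral {0..u} g\<bar> \<le> c / K"
proof -
  have "c \<ge> 0"
    using bound[of 0] \<open>u \<ge> 0\<close> by simp
  have prim: "((\<lambda>s. c * exp (K * s)) has_integral (c * exp (K * u) / K - c * exp (K * 0) / K)) {0..u}"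
  proof (rule fundamental_theorem_of_calculus[OF \<open>u \<ge> 0\<close>])
    fix s assume "s \<in> {0..u}"
    have "((\<lambda>s. c * exp (K * s) / K) has_real_derivative c * exp (K * s)) (at s within {0..u})"
      using \<open>K > 0\<close> by (auto intro!: derivative_eq_intros)
    then show "((\<lambda>s. c * exp (K * s) / K) has_vector_derivative c * exp (K * s)) (at s within {0..u})"
      by (simp add: has_real_derivative_iff_has_vector_derivative)
  qed
  have "norm (integral {0..u} g) \<le> integral {0..u} (\<lambda>s. c * exp (K * s))"
    using bound by (intro integral_norm_bound_integral[OF g has_integral_integrable[OF prim]]) simp
  then have "\<bar>integral {0..u} g\<bar> \<le> c * exp (K * u) / K - c / K"
    using integral_unique[OF prim] by simp
  then have "exp (- (K * u)) * \<bar>integral {0..u} g\<bar> \<le> exp (- (K * u)) * (c * exp (K * u) / K - c / K)"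
    by (rule mult_left_mono) simp
  also have "\<dots> = c / K - exp (- (K * u)) * c / K"
    by (simp add: field_simps exp_minus)
  also have "\<dots> \<le> c / K"
    using \<open>c \<ge> 0\<close> \<open>K > 0\<close> by simp
  finally show ?thesis .
qed

lemma DERIV_ln_nonzero:
  fixes x :: real
  assumes "x \<noteq> 0"
  shows "DERIV ln x :> 1 / x"
proof (cases "x > 0")
  case True
  then show ?thesis by (rule DERIV_ln_divide)
next
  case False
  with assms have "- x > 0" by simp
  have "DERIV (\<lambda>u. ln (- u)) x :> 1 / (- x) * (- 1)"
    by (rule DERIV_chain2[where g=uminus, OF DERIV_ln_divide[OF \<open>- x > 0\<close>]])
       (auto intro!: derivative_eq_intros)
  then show ?thesis
    by (simp add: ln_minus)
qed

lemma abs_power_diff_le: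
  fixes x y R :: real
  assumes x: "\<bar>x\<bar> \<le> R" and y: "\<bar>y\<bar> \<le> R"
  shows "\<bar>x ^ n - y ^ n\<bar> \<le> n * R ^ (n - 1) * \<bar>x - y\<bar>"
proof -
  have "\<bar>y ^ (n - Suc i) * x ^ i\<bar> \<le> R ^ (n - 1)" if "i < n" for i
  proof -
    have "\<bar>y ^ (n - Suc i) * x ^ i\<bar> \<le> R ^ (n - Suc i) * R ^ i"
      unfolding abs_mult power_abs using x y by (intro mult_mono power_mono) auto
    also have "\<dots> = R ^ (n - 1)"
      using that by (simp flip: power_add)
    finally show ?thesis .
  qed
  then have "(\<Sum>i<n. \<bar>y ^ (n - Suc i) * x ^ i\<bar>) \<le> (\<Sum>i<n. R ^ (n - 1))"
    by (intro sum_mono) simp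
  then have "(\<Sum>i<n. \<bar>y ^ (n - Suc i) * x ^ i\<bar>) \<le> n * R ^ (n - 1)"
    by simp
  then have "\<bar>\<Sum>i<n. y ^ (n - Suc i) * x ^ i\<bar> \<le> n * R ^ (n - 1)"
    by (rule order_trans[OF sum_abs])
  then have "\<bar>x - y\<bar> * \<bar>\<Sum>i<n. y ^ (n - Suc i) * x ^ i\<bar> \<le> \<bar>x - y\<bar> * (n * R ^ (n - 1))"
    by (rule mult_left_mono) simp
  then show ?thesis
    unfolding power_diff_sumr2 abs_mult by (simp only: mult.commute)
qed

section \<open>Lipschitz differential equations on the unit interval\<close>

text \<open>The Picard operator of \<open>y' = f t y\<close>, \<open>y 0 = y0\<close>, conjugated by the weight \<open>exp (K * t)\<close>:
  a fixed point \<open>\<psi>\<close> yields the solution \<open>exp (K * t) * \<psi> t\<close>. The weight makes it a contraction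
  for the sup norm once \<open>K > 2 * L\<close>; clipping the time to \<open>[0, 1]\<close> lets it act on bounded
  continuous functions on the whole line.\<close>
definition weighted_picard :: "real \<Rightarrow> (real \<Rightarrow> real \<Rightarrow> real) \<Rightarrow> real \<Rightarrow> (real \<Rightarrow> real) \<Rightarrow> real \<Rightarrow> real"
  where "weighted_picard K f y0 \<psi> t =
    (let u = max 0 (min 1 t) in exp (- (K * u)) * (y0 + integral {0..u} (\<lambda>s. f s (exp (K * s) * \<psi> s))))"

lemma continuous_on_compose_Icc_UNIV:
  fixes f :: "real \<Rightarrow> real \<Rightarrow> real"
  assumes "continuous_on ({0..1} \<times> UNIV) (\<lambda>(t, v). f t v)" and "continuous_on {0..1} \<phi>"
  shows "continuous_on {0..1} (\<lambda>s. f s (\<phi> s))"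
proof -
  have "continuous_on {0..1} (\<lambda>s. (s, \<phi> s))"
    using assms(2) by (intro continuous_intros)
  from continuous_on_compose2[OF assms(1) this] show ?thesis
    by auto
qed

lemma weighted_picard_bcontfun:
  assumes cont: "continuous_on ({0..1} \<times> UNIV) (\<lambda>(t, v). f t v)" and "continuous_on UNIV \<psi>"
  shows "weighted_picard K f y0 \<psi> \<in> bcontfun"
proof -
  define Q where "Q u = exp (- (K * u)) * (y0 + integral {0..u} (\<lambda>s. f s (exp (K * s) * \<psi> s)))" for u
  have "continuous_on {0..1} (\<lambda>s. f s (exp (K * s) * \<psi> s))"
    by (rule continuous_on_compose_Icc_UNIV[OF cont])
       (intro continuous_intros continuous_on_subset[OF \<open>continuous_on UNIV \<psi>\<close>], simp)
  then have "continuous_on {0..1} Q"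
    unfolding Q_def by (intro continuous_intros DERIV_continuous_on[OF integral_has_real_derivative])
  moreover have clip: "continuous_on UNIV (\<lambda>t. max 0 (min 1 t) :: real)" "max 0 (min 1 t) \<in> {0..1}" for t :: real
    by (auto intro!: continuous_intros)
  ultimately have "continuous_on UNIV (Q \<circ> (\<lambda>t. max 0 (min 1 t)))"
    by (metis continuous_on_compose continuous_on_subset image_subset_iff)
  moreover have "bounded (Q ` {0..1})"
    using compact_continuous_image[OF \<open>continuous_on {0..1} Q\<close>] by (auto intro: compact_imp_bounded)
  then have "bounded (range (Q \<circ> (\<lambda>t. max 0 (min 1 t))))"
    by (rule bounded_subset) (use clip(2) in auto)
  moreover have "weighted_picard K f y0 \<psi> = Q \<circ> (\<lambda>t. max 0 (min 1 t))"
    by (auto simp: weighted_picard_def Q_def Let_def)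
  ultimately show ?thesis
    by (simp add: bcontfun_def)
qed

lemma weighted_picard_contraction:
  assumes cont: "continuous_on ({0..1} \<times> UNIV) (\<lambda>(t, v). f t v)"
    and lip: "\<And>t v w. t \<in> {0..1} \<Longrightarrow> \<bar>f t v - f t w\<bar> \<le> L * \<bar>v - w\<bar>"
    and "K > 0" and \<phi>: "continuous_on {0..1} \<phi>" and \<psi>: "continuous_on {0..1} \<psi>"
    and close: "\<And>s. s \<in> {0..1} \<Longrightarrow> \<bar>\<phi> s - \<psi> s\<bar> \<le> d"
  shows "\<bar>weighted_picard K f y0 \<phi> t - weighted_picard K f y0 \<psi> t\<bar> \<le> L * d / K"
proof -
  define u :: real where "u = max 0 (min 1 t)"
  define g where "g \<zeta> s = f s (exp (K * s) * \<zeta> s)" for \<zeta> s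
  have u: "u \<in> {0..1}"
    by (simp add: u_def)
  have int: "g \<zeta> integrable_on {0..u}" if "continuous_on {0..1} \<zeta>" for \<zeta>
  proof -
    have "continuous_on {0..1} (g \<zeta>)"
      unfolding g_def[abs_def] by (rule continuous_on_compose_Icc_UNIV[OF cont]) (intro continuous_intros that)
    then show ?thesis
      by (rule integrable_continuous_interval[OF continuous_on_subset]) (use u in auto)
  qed
  have pointwise: "\<bar>g \<phi> s - g \<psi> s\<bar> \<le> L * d * exp (K * s)" if "s \<in> {0..u}" for s
  proof -
    have "s \<in> {0..1}"
      using that u by auto
    then have "\<bar>g \<phi> s - g \<psi> s\<bar> \<le> L * \<bar>exp (K * s) * \<phi> s - exp (K * s) * \<psi> s\<bar>"
      unfolding g_def by (rule lip)
    also have "\<dots> = L * (exp (K * s) * \<bar>\<phi> s - \<psi> s\<bar>)"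
      by (simp add: abs_mult flip: right_diff_distrib)
    also have "\<dots> \<le> L * (exp (K * s) * d)"
      using lip[of 0 1 0] close[OF \<open>s \<in> {0..1}\<close>] by (intro mult_left_mono) auto
    finally show ?thesis
      by (simp add: mult_ac)
  qed
  have "exp (- (K * u)) * \<bar>integral {0..u} (\<lambda>s. g \<phi> s - g \<psi> s)\<bar> \<le> L * d / K"
    by (rule integral_exp_weighted_bound[OF integrable_diff[OF int[OF \<phi>] int[OF \<psi>]] _ \<open>K > 0\<close> pointwise])
       (use u in auto)
  moreover have "integral {0..u} (\<lambda>s. g \<phi> s - g \<psi> s) = integral {0..u} (g \<phi>) - integral {0..u} (g \<psi>)"
    by (intro Henstock_Kurzweil_Integration.integral_diff int[OF \<phi>] int[OF \<psi>])
  moreover have "weighted_picard K f y0 \<phi> t - weighted_picard K f y0 \<psi> t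
      = exp (- (K * u)) * (integral {0..u} (g \<phi>) - integral {0..u} (g \<psi>))"
    by (simp add: weighted_picard_def Let_def u_def[symmetric] g_def[abs_def] algebra_simps)
  ultimately show ?thesis
    by (simp add: abs_mult)
qed

lemma weighted_picard_fixed_point:
  assumes cont: "continuous_on ({0..1} \<times> UNIV) (\<lambda>(t, v). f t v)"
    and lip: "\<And>t v w. t \<in> {0..1} \<Longrightarrow> \<bar>f t v - f t w\<bar> \<le> L * \<bar>v - w\<bar>"
  obtains K \<psi> where "continuous_on UNIV \<psi>" and "\<And>t. weighted_picard K f y0 \<psi> t = \<psi> t"
proof -
  define K where "K = 2 * L + 1"
  have "L \<ge> 0"
    using lip[of 0 1 0] by simp
  then have K: "K > 0" "L / K \<le> 1 / 2"
    by (auto simp: K_def field_simps)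
  define T where "T \<psi> = Bcontfun (weighted_picard K f y0 (apply_bcontfun \<psi>))" for \<psi> :: "real \<Rightarrow>\<^sub>C real"
  have T: "apply_bcontfun (T \<psi>) = weighted_picard K f y0 (apply_bcontfun \<psi>)" for \<psi>
    unfolding T_def by (rule Bcontfun_inverse[OF weighted_picard_bcontfun[OF cont]]) simp
  have "dist (T \<psi>) (T \<phi>) \<le> 1 / 2 * dist \<psi> \<phi>" for \<psi> \<phi>
  proof (rule dist_bound)
    fix t
    have "\<bar>weighted_picard K f y0 \<psi> t - weighted_picard K f y0 \<phi> t\<bar> \<le> L * dist \<psi> \<phi> / K"
      using dist_bounded[of \<psi> _ \<phi>]
      by (intro weighted_picard_contraction[OF cont lip K(1)]) (simp_all add: dist_real_def)
    also have "\<dots> \<le> 1 / 2 * dist \<psi> \<phi>"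
      using K mult_right_mono[OF K(2) zero_le_dist[of \<psi> \<phi>]] by (simp add: field_simps)
    finally show "dist (T \<psi> t) (T \<phi> t) \<le> 1 / 2 * dist \<psi> \<phi>"
      by (simp add: T dist_real_def)
  qed
  then obtain \<psi> where "T \<psi> = \<psi>"
    using banach_fix_type[of "1 / 2" T] by auto
  then show thesis
    by (intro that[of "apply_bcontfun \<psi>" K]) (auto simp flip: T)
qed

lemma lipschitz_ode_exists:
  fixes f :: "real \<Rightarrow> real \<Rightarrow> real"
  assumes cont: "continuous_on ({0..1} \<times> UNIV) (\<lambda>(t, v). f t v)"
    and lip: "\<And>t v w. t \<in> {0..1} \<Longrightarrow> \<bar>f t v - f t w\<bar> \<le> L * \<bar>v - w\<bar>"
  obtains y where "y 0 = y0"
    and "\<And>t. t \<in> {0..1} \<Longrightarrow> (y has_real_derivative f t (y t)) (at t within {0..1})"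
proof -
  obtain K \<psi> where "continuous_on UNIV \<psi>" and fixed: "\<And>t. weighted_picard K f y0 \<psi> t = \<psi> t"
    using weighted_picard_fixed_point[OF cont lip] by blast
  define y where "y t = exp (K * t) * \<psi> t" for t
  have y_eq: "y t = y0 + integral {0..t} (\<lambda>s. f s (y s))" if "t \<in> {0..1}" for t
  proof -
    have "\<psi> t = exp (- (K * t)) * (y0 + integral {0..t} (\<lambda>s. f s (y s)))"
      using fixed[of t] that by (simp add: weighted_picard_def y_def)
    then show ?thesis
      by (simp add: y_def exp_minus)
  qed
  have "continuous_on {0..1} (\<lambda>s. f s (y s))"
    unfolding y_def by (rule continuous_on_compose_Icc_UNIV[OF cont])
      (intro continuous_intros continuous_on_subset[OF \<open>continuous_on UNIV \<psi>\<close>], simp)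
  then have "((\<lambda>t. y0 + integral {0..t} (\<lambda>s. f s (y s))) has_real_derivative f t (y t))
      (at t within {0..1})" if "t \<in> {0..1}" for t
    using DERIV_add[OF DERIV_const integral_has_real_derivative[OF _ that]] by simp
  then have "(y has_real_derivative f t (y t)) (at t within {0..1})" if "t \<in> {0..1}" for t
    by (rule has_field_derivative_transform_within[where d=1, OF _ _ that])
       (use that in \<open>auto intro: y_eq[symmetric]\<close>)
  moreover have "y 0 = y0"
    using y_eq[of 0] by simp
  ultimately show ?thesis
    using that by blast
qed

lemma lipschitz_ode_dependence:
  fixes f :: "real \<Rightarrow> real \<Rightarrow> real"
  assumes lip: "\<And>t v w. t \<in> {0..1} \<Longrightarrow> \<bar>f t v - f t w\<bar> \<le> L * \<bar>v - w\<bar>"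
    and x: "\<And>t. t \<in> {0..1} \<Longrightarrow> (x has_real_derivative f t (x t)) (at t within {0..1})"
    and y: "\<And>t. t \<in> {0..1} \<Longrightarrow> (y has_real_derivative f t (y t)) (at t within {0..1})"
    and t: "t \<in> {0..1}"
  shows "\<bar>y t - x t\<bar> \<le> exp (L * t) * \<bar>y 0 - x 0\<bar>"
proof -
  define d where "d t = y t - x t" for t
  define W where "W t = - (d t ^ 2 * exp (- (2 * L * t)))" for t
  have W_deriv: "(W has_real_derivative 2 * exp (- (2 * L * s)) * (L * d s ^ 2 - d s * (f s (y s) - f s (x s))))
      (at s within {0..1})" if s: "s \<in> {0..1}" for s
  proof -
    have d: "(d has_real_derivative f s (y s) - f s (x s)) (at s within {0..1})"
      unfolding d_def by (rule DERIV_diff[OF y[OF s] x[OF s]])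
    have e: "((\<lambda>s. exp (- (2 * L * s))) has_real_derivative exp (- (2 * L * s)) * - (2 * L))
        (at s within {0..1})"
      by (rule DERIV_cong[OF DERIV_chain2[OF DERIV_exp DERIV_minus[OF DERIV_cmult[OF DERIV_ident]]]]) simp
    show ?thesis
      unfolding W_def
      by (rule DERIV_cong[OF DERIV_minus[OF DERIV_mult[OF DERIV_power[OF d, of 2] e]]])
         (simp add: algebra_simps)
  qed
  have W_deriv_nonneg: "2 * exp (- (2 * L * s)) * (L * d s ^ 2 - d s * (f s (y s) - f s (x s))) \<ge> 0"
    if "s \<in> {0..1}" for s
  proof -
    have "d s * (f s (y s) - f s (x s)) \<le> \<bar>d s\<bar> * \<bar>f s (y s) - f s (x s)\<bar>"
      by (simp flip: abs_mult)
    also have "\<dots> \<le> \<bar>d s\<bar> * (L * \<bar>d s\<bar>)"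
      using lip[OF that, of "y s" "x s"] by (intro mult_left_mono) (simp_all add: d_def)
    finally show ?thesis
      by (simp add: power2_eq_square abs_mult_self_eq mult.left_commute)
  qed
  have "W 0 \<le> W t"
    by (rule deriv_nonneg_imp_mono_Icc[OF W_deriv W_deriv_nonneg]) (use t in auto)
  then have "d t ^ 2 * exp (- (2 * L * t)) \<le> d 0 ^ 2"
    by (simp add: W_def)
  then have "d t ^ 2 * exp (- (2 * L * t)) * exp (2 * L * t) \<le> d 0 ^ 2 * exp (2 * L * t)"
    by (rule mult_right_mono) simp
  then have "d t ^ 2 \<le> (exp (L * t) * d 0) ^ 2"
    by (simp add: power_mult_distrib mult.assoc mult.commute[of "d 0 ^ 2"] flip: exp_add exp_double)
  then show ?thesis
    by (simp add: d_def abs_le_square_iff[symmetric] abs_mult)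
qed

section \<open>Solutions of the Abel equation\<close>

lemma smooth01_continuous_on:
  assumes "smooth01 f"
  shows "continuous_on {0..1} f"
proof -
  obtain D where "D 0 = f" "\<And>n t. t \<in> {0..1} \<Longrightarrow> (D n has_real_derivative D (Suc n) t) (at t within {0..1})"
    using assms unfolding smooth01_def by blast
  then show ?thesis
    using DERIV_continuous_on[of "{0..1}" "D 0"] by blast
qed

lemma abel_solD:
  "abel_sol A B x \<Longrightarrow> t \<in> {0..1} \<Longrightarrow>
    (x has_real_derivative A t * x t ^ 3 + B t * x t ^ 2) (at t within {0..1})"
  by (simp add: abel_sol_def)

lemma abel_sol_continuous_on: "abel_sol A B x \<Longrightarrow> continuous_on {0..1} x"
  by (rule DERIV_continuous_on) (rule abel_solD)

lemma abel_sol_zero: "abel_sol A B (\<lambda>_. 0)"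
  by (simp add: abel_sol_def)

text \<open>For two solutions \<open>x\<close>, \<open>y\<close>, factoring \<open>y\<^sup>3 - x\<^sup>3\<close> and \<open>y\<^sup>2 - x\<^sup>2\<close> shows that \<open>y - x\<close> solves
  \<open>w' = abel_secant A B x y * w\<close>; for \<open>y = x\<close> this is the variational equation along \<open>x\<close>.\<close>
definition abel_secant :: "(real \<Rightarrow> real) \<Rightarrow> (real \<Rightarrow> real) \<Rightarrow> (real \<Rightarrow> real) \<Rightarrow> (real \<Rightarrow> real) \<Rightarrow> real \<Rightarrow> real"
  where "abel_secant A B x y s = A s * (x s ^ 2 + x s * y s + y s ^ 2) + B s * (x s + y s)"

lemma abel_secant_diff_bound:
  "\<bar>abel_secant A B x y s - abel_secant A B x x s\<bar>
    \<le> \<bar>y s - x s\<bar> * (\<bar>A s\<bar> * (\<bar>y s - x s\<bar> + 3 * \<bar>x s\<bar>) + \<bar>B s\<bar>)"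
proof -
  have "abel_secant A B x y s - abel_secant A B x x s = (y s - x s) * (A s * ((y s - x s) + 3 * x s) + B s)"
    by (simp add: abel_secant_def algebra_simps power2_eq_square)
  moreover have "\<bar>A s * ((y s - x s) + 3 * x s) + B s\<bar> \<le> \<bar>A s\<bar> * (\<bar>y s - x s\<bar> + 3 * \<bar>x s\<bar>) + \<bar>B s\<bar>"
    by (rule order_trans[OF abs_triangle_ineq add_right_mono])
       (simp add: abs_mult mult_left_mono abs_triangle_ineq[THEN order_trans])
  ultimately show ?thesis
    by (simp add: abs_mult mult_left_mono)
qed

lemma abel_field_lipschitz:
  fixes a b v w :: real
  assumes "\<bar>a\<bar> \<le> M\<^sub>a" "\<bar>b\<bar> \<le> M\<^sub>b" "\<bar>v\<bar> \<le> R" "\<bar>w\<bar> \<le> R"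
  shows "\<bar>(a * v ^ 3 + b * v ^ 2) - (a * w ^ 3 + b * w ^ 2)\<bar> \<le> (M\<^sub>a * (3 * R\<^sup>2) + M\<^sub>b * (2 * R)) * \<bar>v - w\<bar>"
proof -
  have "\<bar>v ^ 3 - w ^ 3\<bar> \<le> 3 * R\<^sup>2 * \<bar>v - w\<bar>" "\<bar>v ^ 2 - w ^ 2\<bar> \<le> 2 * R * \<bar>v - w\<bar>"
    using abs_power_diff_le[OF assms(3,4), of 3] abs_power_diff_le[OF assms(3,4), of 2] by simp_all
  then have "\<bar>a\<bar> * \<bar>v ^ 3 - w ^ 3\<bar> + \<bar>b\<bar> * \<bar>v ^ 2 - w ^ 2\<bar>
      \<le> M\<^sub>a * (3 * R\<^sup>2 * \<bar>v - w\<bar>) + M\<^sub>b * (2 * R * \<bar>v - w\<bar>)"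
    using assms by (intro add_mono mult_mono) auto
  moreover have "\<bar>(a * v ^ 3 + b * v ^ 2) - (a * w ^ 3 + b * w ^ 2)\<bar>
      \<le> \<bar>a\<bar> * \<bar>v ^ 3 - w ^ 3\<bar> + \<bar>b\<bar> * \<bar>v ^ 2 - w ^ 2\<bar>"
    unfolding abs_mult[symmetric] right_diff_distrib[symmetric]
    by (rule order_trans[OF _ abs_triangle_ineq]) (simp add: algebra_simps)
  ultimately show ?thesis
    by (simp add: algebra_simps)
qed

text \<open>Outside \<open>\<bar>v\<bar> \<le> R\<close> the right-hand side is frozen, which makes it globally Lipschitz in \<open>v\<close>;
  solutions that stay in \<open>\<bar>v\<bar> \<le> R\<close> do not see the difference.\<close>
definition abel_field_clipped :: "(real \<Rightarrow> real) \<Rightarrow> (real \<Rightarrow> real) \<Rightarrow> real \<Rightarrow> real \<Rightarrow> real \<Rightarrow> real"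
  where "abel_field_clipped A B R t v =
    A t * max (- R) (min R v) ^ 3 + B t * max (- R) (min R v) ^ 2"

lemma abel_field_clipped_eq:
  "\<bar>v\<bar> \<le> R \<Longrightarrow> abel_field_clipped A B R t v = A t * v ^ 3 + B t * v ^ 2"
  by (simp add: abel_field_clipped_def)

locale abel_equation =
  fixes A B :: "real \<Rightarrow> real"
  assumes continuous_A: "continuous_on {0..1} A" and continuous_B: "continuous_on {0..1} B"
begin

lemma continuous_on_abel_secant:
  "continuous_on {0..1} x \<Longrightarrow> continuous_on {0..1} y \<Longrightarrow> continuous_on {0..1} (abel_secant A B x y)"
  unfolding abel_secant_def[abs_def] by (intro continuous_intros continuous_A continuous_B)

lemma abel_sol_diff:
  assumes x: "abel_sol A B x" and y: "abel_sol A B y" and t: "t \<in> {0..1}"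
  shows "y t - x t = (y 0 - x 0) * exp (integral {0..t} (abel_secant A B x y))"
proof (rule linear_ode_solution_Icc[where w = "\<lambda>t. y t - x t", OF _ _ t])
  fix s :: real assume s: "s \<in> {0..1}"
  show "((\<lambda>t. y t - x t) has_real_derivative (y s - x s) * abel_secant A B x y s) (at s within {0..1})"
    by (rule DERIV_cong[OF DERIV_diff[OF abel_solD[OF y s] abel_solD[OF x s]]])
       (simp add: abel_secant_def algebra_simps power2_eq_square power3_eq_cube)
qed (intro continuous_on_abel_secant abel_sol_continuous_on[OF x] abel_sol_continuous_on[OF y])

corollary abel_sol_unique:
  assumes "abel_sol A B x" "abel_sol A B y" "x 0 = y 0" "t \<in> {0..1}"
  shows "x t = y t"
  using abel_sol_diff[OF assms(1,2,4)] assms(3) by simp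

corollary abel_sol_eq_exp_integral:
  assumes "abel_sol A B x" "t \<in> {0..1}"
  shows "x t = x 0 * exp (integral {0..t} (\<lambda>s. A s * x s ^ 2 + B s * x s))"
  using abel_sol_diff[OF abel_sol_zero assms] by (simp add: abel_secant_def[abs_def])

lemma poincare_abel_sol:
  assumes "abel_sol A B x"
  shows "poincare A B (x 0) = x 1"
  unfolding poincare_def
proof (rule the_equality)
  show "\<exists>y. abel_sol A B y \<and> y 0 = x 0 \<and> y 1 = x 1"
    using assms by blast
next
  fix z assume "\<exists>y. abel_sol A B y \<and> y 0 = x 0 \<and> y 1 = z"
  then show "z = x 1"
    using abel_sol_unique[OF _ assms, of _ 1] by auto
qed

lemma nonzero_orbit_nonvanishing:
  assumes x: "abel_sol A B x" and "nonzero_orbit x" and t: "t \<in> {0..1}"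
  shows "x t \<noteq> 0"
proof -
  obtain t1 where "t1 \<in> {0..1}" "x t1 \<noteq> 0"
    using \<open>nonzero_orbit x\<close> by (auto simp: nonzero_orbit_def)
  then have "x 0 \<noteq> 0"
    using abel_sol_eq_exp_integral[OF x] by fastforce
  then show ?thesis
    using abel_sol_eq_exp_integral[OF x t] by simp
qed

lemma periodic_orbit_integral_eq_0:
  assumes "periodic_orbit A B x" and "nonzero_orbit x"
  shows "integral {0..1} (\<lambda>s. A s * x s ^ 2 + B s * x s) = 0"
proof -
  have x: "abel_sol A B x" and "x 1 = x 0"
    using assms(1) by (auto simp: periodic_orbit_def)
  moreover have "x 0 \<noteq> 0"
    using nonzero_orbit_nonvanishing[OF x assms(2)] by simp
  ultimately show ?thesis
    using abel_sol_eq_exp_integral[OF x, of 1] by simp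
qed

lemma continuous_on_abel_field_clipped:
  "continuous_on ({0..1} \<times> UNIV) (\<lambda>(t, v). abel_field_clipped A B R t v)"
proof -
  have "continuous_on ({0..1} \<times> UNIV)
      (\<lambda>p. A (fst p) * max (- R) (min R (snd p)) ^ 3 + B (fst p) * max (- R) (min R (snd p)) ^ 2)"
    by (intro continuous_intros continuous_on_compose2[OF continuous_A] continuous_on_compose2[OF continuous_B])
       auto
  then show ?thesis
    by (simp add: abel_field_clipped_def case_prod_beta')
qed

lemma abel_field_clipped_lipschitz:
  assumes "R \<ge> 0"
  obtains L where "L \<ge> 0"
    and "\<And>t v w. t \<in> {0..1} \<Longrightarrow> \<bar>abel_field_clipped A B R t v - abel_field_clipped A B R t w\<bar> \<le> L * \<bar>v - w\<bar>"
proof -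
  obtain M\<^sub>A where M\<^sub>A: "\<And>t. t \<in> {0..1} \<Longrightarrow> \<bar>A t\<bar> \<le> M\<^sub>A"
    using continuous_on_Icc_abs_bound[OF continuous_A] by blast
  obtain M\<^sub>B where M\<^sub>B: "\<And>t. t \<in> {0..1} \<Longrightarrow> \<bar>B t\<bar> \<le> M\<^sub>B"
    using continuous_on_Icc_abs_bound[OF continuous_B] by blast
  define L where "L = M\<^sub>A * (3 * R\<^sup>2) + M\<^sub>B * (2 * R)"
  show thesis
  proof (rule that)
    show "L \<ge> 0"
      using M\<^sub>A[of 0] M\<^sub>B[of 0] \<open>R \<ge> 0\<close> by (simp add: L_def)
    fix t v w :: real assume t: "t \<in> {0..1}"
    define clip where "clip v = max (- R) (min R v)" for v
    have "\<bar>abel_field_clipped A B R t v - abel_field_clipped A B R t w\<bar> \<le> L * \<bar>clip v - clip w\<bar>"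
      unfolding abel_field_clipped_def L_def clip_def[symmetric] using M\<^sub>A[OF t] M\<^sub>B[OF t] \<open>R \<ge> 0\<close>
      by (intro abel_field_lipschitz) (auto simp: clip_def)
    also have "\<dots> \<le> L * \<bar>v - w\<bar>"
      using \<open>L \<ge> 0\<close> by (intro mult_left_mono) (auto simp: clip_def)
    finally show "\<bar>abel_field_clipped A B R t v - abel_field_clipped A B R t w\<bar> \<le> L * \<bar>v - w\<bar>" .
  qed
qed

lemma abel_sol_near:
  assumes x: "abel_sol A B x"
  obtains \<eta> C where "\<eta> > 0" and "C \<ge> 0"
    and "\<And>x0. \<bar>x0 - x 0\<bar> < \<eta> \<Longrightarrow>
      \<exists>y. abel_sol A B y \<and> y 0 = x0 \<and> (\<forall>t\<in>{0..1}. \<bar>y t - x t\<bar> \<le> C * \<bar>x0 - x 0\<bar>)"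
proof -
  obtain M where M: "\<And>t. t \<in> {0..1} \<Longrightarrow> \<bar>x t\<bar> \<le> M"
    using continuous_on_Icc_abs_bound[OF abel_sol_continuous_on[OF x]] by blast
  define F where "F = abel_field_clipped A B (M + 1)"
  have "M + 1 \<ge> 0"
    using M[of 0] by simp
  then obtain L where "L \<ge> 0" and F_lip: "\<And>t v w. t \<in> {0..1} \<Longrightarrow> \<bar>F t v - F t w\<bar> \<le> L * \<bar>v - w\<bar>"
    unfolding F_def by (rule abel_field_clipped_lipschitz) blast
  have x_F: "(x has_real_derivative F t (x t)) (at t within {0..1})" if "t \<in> {0..1}" for t
    using abel_solD[OF x that] M[OF that] by (simp add: F_def abel_field_clipped_eq)
  show thesis
  proof (rule that[of "exp (- L)" "exp L"])
    fix x0 assume x0: "\<bar>x0 - x 0\<bar> < exp (- L)"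
    obtain y where "y 0 = x0" and y_F: "\<And>t. t \<in> {0..1} \<Longrightarrow> (y has_real_derivative F t (y t)) (at t within {0..1})"
      using lipschitz_ode_exists[OF continuous_on_abel_field_clipped F_lip[unfolded F_def]] by (auto simp: F_def)
    have close: "\<bar>y t - x t\<bar> \<le> exp L * \<bar>x0 - x 0\<bar>" if "t \<in> {0..1}" for t
    proof -
      have "\<bar>y t - x t\<bar> \<le> exp (L * t) * \<bar>x0 - x 0\<bar>"
        using lipschitz_ode_dependence[OF F_lip x_F y_F that] \<open>y 0 = x0\<close> by simp
      also have "\<dots> \<le> exp L * \<bar>x0 - x 0\<bar>"
        using that \<open>L \<ge> 0\<close> mult_right_le_one_le[of L t] by (intro mult_right_mono) auto
      finally show ?thesis .
    qed
    have "exp L * \<bar>x0 - x 0\<bar> < 1"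
      using x0 by (simp add: exp_minus field_simps)
    then have "\<bar>y t\<bar> \<le> M + 1" if "t \<in> {0..1}" for t
      using close[OF that] M[OF that] by simp
    then have "abel_sol A B y"
      using y_F by (simp add: abel_sol_def F_def abel_field_clipped_eq)
    with \<open>y 0 = x0\<close> close
    show "\<exists>y. abel_sol A B y \<and> y 0 = x0 \<and> (\<forall>t\<in>{0..1}. \<bar>y t - x t\<bar> \<le> exp L * \<bar>x0 - x 0\<bar>)"
      by blast
  qed auto
qed

lemma poincare_difference_quotient:
  assumes x: "abel_sol A B x"
  obtains \<eta> K where "\<eta> > 0"
    and "\<And>h. h \<noteq> 0 \<Longrightarrow> \<bar>h\<bar> < \<eta> \<Longrightarrow> \<exists>J. (poincare A B (x 0 + h) - poincare A B (x 0)) / h = exp J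
      \<and> \<bar>J - integral {0..1} (abel_secant A B x x)\<bar> \<le> K * \<bar>h\<bar>"
proof -
  obtain \<eta> C where "\<eta> > 0" "C \<ge> 0" and near: "\<And>x0. \<bar>x0 - x 0\<bar> < \<eta> \<Longrightarrow>
      \<exists>y. abel_sol A B y \<and> y 0 = x0 \<and> (\<forall>t\<in>{0..1}. \<bar>y t - x t\<bar> \<le> C * \<bar>x0 - x 0\<bar>)"
    using abel_sol_near[OF x] by blast
  obtain M\<^sub>x where M\<^sub>x: "\<And>t. t \<in> {0..1} \<Longrightarrow> \<bar>x t\<bar> \<le> M\<^sub>x"
    using continuous_on_Icc_abs_bound[OF abel_sol_continuous_on[OF x]] by blast
  obtain M\<^sub>A where M\<^sub>A: "\<And>t. t \<in> {0..1} \<Longrightarrow> \<bar>A t\<bar> \<le> M\<^sub>A"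
    using continuous_on_Icc_abs_bound[OF continuous_A] by blast
  obtain M\<^sub>B where M\<^sub>B: "\<And>t. t \<in> {0..1} \<Longrightarrow> \<bar>B t\<bar> \<le> M\<^sub>B"
    using continuous_on_Icc_abs_bound[OF continuous_B] by blast
  define K where "K = C * (M\<^sub>A * (C * \<eta> + 3 * M\<^sub>x) + M\<^sub>B)"
  have integrable: "abel_secant A B x z integrable_on {0..1}" if "abel_sol A B z" for z
    using x that by (intro integrable_continuous_interval continuous_on_abel_secant abel_sol_continuous_on)
  show thesis
  proof (rule that[OF \<open>\<eta> > 0\<close>])
    fix h :: real assume h: "h \<noteq> 0" "\<bar>h\<bar> < \<eta>"
    obtain y where y: "abel_sol A B y" "y 0 = x 0 + h" and close: "\<And>s. s \<in> {0..1} \<Longrightarrow> \<bar>y s - x s\<bar> \<le> C * \<bar>h\<bar>"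
      using near[of "x 0 + h"] h by auto
    have "\<bar>abel_secant A B x y s - abel_secant A B x x s\<bar> \<le> K * \<bar>h\<bar>" if s: "s \<in> {0..1}" for s
    proof -
      have "\<bar>y s - x s\<bar> \<le> C * \<eta>"
        using close[OF s] mult_left_mono[OF less_imp_le[OF h(2)] \<open>C \<ge> 0\<close>] by linarith
      then have "\<bar>A s\<bar> * (\<bar>y s - x s\<bar> + 3 * \<bar>x s\<bar>) + \<bar>B s\<bar> \<le> M\<^sub>A * (C * \<eta> + 3 * M\<^sub>x) + M\<^sub>B"
        using M\<^sub>A[OF s] M\<^sub>B[OF s] M\<^sub>x[OF s] by (intro add_mono mult_mono) auto
      then have "\<bar>y s - x s\<bar> * (\<bar>A s\<bar> * (\<bar>y s - x s\<bar> + 3 * \<bar>x s\<bar>) + \<bar>B s\<bar>)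
          \<le> C * \<bar>h\<bar> * (M\<^sub>A * (C * \<eta> + 3 * M\<^sub>x) + M\<^sub>B)"
        using close[OF s] by (intro mult_mono) auto
      also have "\<dots> = K * \<bar>h\<bar>"
        by (simp add: K_def mult_ac)
      finally show ?thesis
        by (rule order_trans[OF abel_secant_diff_bound])
    qed
    then have "norm (integral {0..1} (\<lambda>s. abel_secant A B x y s - abel_secant A B x x s))
        \<le> integral {0..1} (\<lambda>_ :: real. K * \<bar>h\<bar>)"
      by (intro Henstock_Kurzweil_Integration.integral_norm_bound_integral integrable_diff
          integrable x y(1) integrable_const_ivl) simp_all
    then have "\<bar>integral {0..1} (abel_secant A B x y) - integral {0..1} (abel_secant A B x x)\<bar> \<le> K * \<bar>h\<bar>"
      by (simp add: Henstock_Kurzweil_Integration.integral_diff integrable x y(1))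
    moreover have "(poincare A B (x 0 + h) - poincare A B (x 0)) / h = exp (integral {0..1} (abel_secant A B x y))"
      using abel_sol_diff[OF x y(1), of 1] poincare_abel_sol[OF x] poincare_abel_sol[OF y(1)] y(2) h(1)
      by simp
    ultimately show "\<exists>J. (poincare A B (x 0 + h) - poincare A B (x 0)) / h = exp J
        \<and> \<bar>J - integral {0..1} (abel_secant A B x x)\<bar> \<le> K * \<bar>h\<bar>"
      by blast
  qed
qed

lemma poincare_has_real_derivative:
  assumes x: "abel_sol A B x"
  shows "(poincare A B has_real_derivative exp (integral {0..1} (abel_secant A B x x))) (at (x 0))"
proof -
  define J where "J = integral {0..1} (abel_secant A B x x)"
  define Q where "Q h = (poincare A B (x 0 + h) - poincare A B (x 0)) / h" for h
  obtain \<eta> K where "\<eta> > 0" and quotient: "\<And>h. h \<noteq> 0 \<Longrightarrow> \<bar>h\<bar> < \<eta> \<Longrightarrow> \<exists>J'. Q h = exp J' \<and> \<bar>J' - J\<bar> \<le> K * \<bar>h\<bar>"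
    unfolding Q_def J_def by (rule poincare_difference_quotient[OF x]) blast
  have "eventually (\<lambda>h. h \<noteq> 0 \<and> \<bar>h\<bar> < \<eta>) (at (0 :: real))"
    using \<open>\<eta> > 0\<close> by (auto simp: eventually_at dist_real_def)
  then have near_0: "eventually (\<lambda>h. Q h > 0 \<and> \<bar>ln (Q h) - J\<bar> \<le> K * \<bar>h\<bar>) (at 0)"
    by (rule eventually_mono) (use quotient in force)
  have "((\<lambda>h. K * \<bar>h\<bar>) \<longlongrightarrow> 0) (at (0 :: real))"
    by (auto intro!: tendsto_eq_intros)
  then have "((\<lambda>h. ln (Q h) - J) \<longlongrightarrow> 0) (at 0)"
    by (rule Lim_null_comparison[rotated]) (use near_0 in \<open>auto elim: eventually_mono\<close>)
  then have "((\<lambda>h. exp (ln (Q h))) \<longlongrightarrow> exp J) (at 0)"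
    by (intro tendsto_exp) (simp only: LIM_zero_iff)
  then have "(Q \<longlongrightarrow> exp J) (at 0)"
    by (rule Lim_transform_eventually) (use near_0 in \<open>auto elim: eventually_mono\<close>)
  then show ?thesis
    by (simp add: DERIV_def Q_def[abs_def] J_def)
qed

end

section \<open>A combination of the coefficients of constant sign\<close>

text \<open>A primitive of \<open>1 / (v\<^sup>2 * (b * v - a))\<close>, by partial fractions. Since \<open>ln (- v) = ln v\<close>
  in Isabelle, \<open>ln\<close> here plays the role of \<open>ln \<bar>\<cdot>\<bar>\<close>.\<close>
definition recip_cubic_primitive :: "real \<Rightarrow> real \<Rightarrow> real \<Rightarrow> real"
  where "recip_cubic_primitive a b v =
    (if a = 0 then - 1 / (2 * b * v\<^sup>2) else 1 / (a * v) - b / a\<^sup>2 * ln v + b / a\<^sup>2 * ln (b * v - a))"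

lemma recip_cubic_primitive_deriv:
  assumes v: "v \<noteq> 0" and w: "b * v - a \<noteq> 0"
  shows "(recip_cubic_primitive a b has_real_derivative 1 / (v\<^sup>2 * (b * v - a))) (at v)"
proof (cases "a = 0")
  case True
  with w have "b \<noteq> 0"
    by auto
  have "((\<lambda>v. - 1 / (2 * b * v\<^sup>2)) has_real_derivative 1 / (v\<^sup>2 * (b * v - a))) (at v)"
    using v \<open>b \<noteq> 0\<close> True
    by (auto intro!: derivative_eq_intros simp: field_simps power2_eq_square power3_eq_cube)
  with True show ?thesis
    by (simp add: recip_cubic_primitive_def[abs_def])
next
  case False
  have "((\<lambda>v. 1 / (a * v)) has_real_derivative - (1 / (a * v\<^sup>2))) (at v)"
    using v False by (auto intro!: derivative_eq_intros simp: field_simps power2_eq_square)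
  moreover have "((\<lambda>v. ln (b * v - a)) has_real_derivative 1 / (b * v - a) * b) (at v)"
    by (rule DERIV_chain2[where g = "\<lambda>v. b * v - a", OF DERIV_ln_nonzero[OF w]])
       (auto intro!: derivative_eq_intros)
  ultimately have "((\<lambda>v. 1 / (a * v) - b / a\<^sup>2 * ln v + b / a\<^sup>2 * ln (b * v - a)) has_real_derivative
      - (1 / (a * v\<^sup>2)) - b / a\<^sup>2 * (1 / v) + b / a\<^sup>2 * (1 / (b * v - a) * b)) (at v)"
    by (intro DERIV_add DERIV_diff DERIV_cmult DERIV_ln_nonzero v)
  moreover have "- (1 / (a * v\<^sup>2)) - b / a\<^sup>2 * (1 / v) + b / a\<^sup>2 * (1 / (b * v - a) * b)
      = 1 / (v\<^sup>2 * (b * v - a))"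
    using v w False by (simp add: field_simps power2_eq_square)
  ultimately show ?thesis
    using False by (simp add: recip_cubic_primitive_def[abs_def])
qed

lemma abel_sol_recip_cubic_primitive_deriv:
  assumes "abel_sol A B x" "t \<in> {0..1}" "x t \<noteq> 0" "b * x t - a \<noteq> 0"
  shows "((\<lambda>t. recip_cubic_primitive a b (x t)) has_real_derivative (A t * x t + B t) / (b * x t - a))
    (at t within {0..1})"
proof (rule DERIV_cong[OF DERIV_chain2[OF recip_cubic_primitive_deriv[OF assms(3,4)] abel_solD[OF assms(1,2)]]])
  show "1 / ((x t)\<^sup>2 * (b * x t - a)) * (A t * x t ^ 3 + B t * x t ^ 2) = (A t * x t + B t) / (b * x t - a)"
    using assms(3,4) by (simp add: field_simps power2_eq_square power3_eq_cube)
qed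

lemma abel_sols_recip_cubic_primitive_diff_deriv:
  assumes x: "abel_sol A B x" and y: "abel_sol A B y" and s: "s \<in> {0..1}"
    and "x s \<noteq> 0" "y s \<noteq> 0" and thr: "b * x s - a \<noteq> 0" "b * y s - a \<noteq> 0"
  shows "((\<lambda>s. recip_cubic_primitive a b (x s) - recip_cubic_primitive a b (y s)) has_real_derivative
    (a * A s + b * B s) * ((y s - x s) / ((b * x s - a) * (b * y s - a)))) (at s within {0..1})"
proof (rule DERIV_cong[OF DERIV_diff[OF abel_sol_recip_cubic_primitive_deriv[OF x s \<open>x s \<noteq> 0\<close> thr(1)]
      abel_sol_recip_cubic_primitive_deriv[OF y s \<open>y s \<noteq> 0\<close> thr(2)]]])
  have "(A s * x s + B s) / (b * x s - a) - (A s * y s + B s) / (b * y s - a)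
      = ((A s * x s + B s) * (b * y s - a) - (A s * y s + B s) * (b * x s - a))
        / ((b * x s - a) * (b * y s - a))"
    using thr by (simp add: diff_frac_eq)
  also have "\<dots> = (a * A s + b * B s) * ((y s - x s) / ((b * x s - a) * (b * y s - a)))"
    by (simp add: algebra_simps)
  finally show "(A s * x s + B s) / (b * x s - a) - (A s * y s + B s) / (b * y s - a)
      = (a * A s + b * B s) * ((y s - x s) / ((b * x s - a) * (b * y s - a)))" .
qed

locale abel_sign_condition = abel_equation +
  fixes a b :: real
  assumes combination_nonneg: "\<And>t. t \<in> {0..1} \<Longrightarrow> a * A t + b * B t \<ge> 0"
    and combination_nonzero: "\<exists>t\<in>{0..1}. a * A t + b * B t \<noteq> 0"
begin

lemma weighted_threshold_increasing:
  assumes x: "abel_sol A B x" and "nonzero_orbit x"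
  defines "Z \<equiv> \<lambda>t. (b * x t - a) * exp (- integral {0..t} (\<lambda>s. A s * x s ^ 2))"
  shows "\<And>s u. 0 \<le> s \<Longrightarrow> s \<le> u \<Longrightarrow> u \<le> 1 \<Longrightarrow> Z s \<le> Z u" and "Z 0 < Z 1"
proof -
  define H where "H t = integral {0..t} (\<lambda>s. A s * x s ^ 2)" for t
  have "continuous_on {0..1} (\<lambda>s. A s * x s ^ 2)"
    using abel_sol_continuous_on[OF x] by (intro continuous_intros continuous_A)
  then have H: "(H has_real_derivative A t * x t ^ 2) (at t within {0..1})" if "t \<in> {0..1}" for t
    unfolding H_def using that by (rule integral_has_real_derivative)
  have Z_deriv: "(Z has_real_derivative exp (- H t) * (x t ^ 2 * (a * A t + b * B t))) (at t within {0..1})"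
    if "t \<in> {0..1}" for t
    unfolding Z_def H_def[symmetric]
    by (rule DERIV_cong[OF DERIV_mult[OF DERIV_diff[OF DERIV_cmult[OF abel_solD[OF x that]] DERIV_const]
          DERIV_chain2[OF DERIV_exp DERIV_minus[OF H[OF that]]]]])
       (simp add: algebra_simps power2_eq_square power3_eq_cube)
  have Z_deriv_nonneg: "exp (- H t) * (x t ^ 2 * (a * A t + b * B t)) \<ge> 0" if "t \<in> {0..1}" for t
    using combination_nonneg[OF that] by simp
  show "Z s \<le> Z u" if "0 \<le> s" "s \<le> u" "u \<le> 1" for s u
    by (rule deriv_nonneg_imp_mono_Icc[OF Z_deriv Z_deriv_nonneg]) (use that in auto)
  obtain t0 where t0: "t0 \<in> {0..1}" "a * A t0 + b * B t0 \<noteq> 0"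
    using combination_nonzero by blast
  moreover have "x t0 \<noteq> 0"
    using nonzero_orbit_nonvanishing[OF x \<open>nonzero_orbit x\<close> t0(1)] .
  ultimately show "Z 0 < Z 1"
    by (intro deriv_nonneg_imp_less_Icc[OF Z_deriv Z_deriv_nonneg, of t0]) auto
qed

lemma periodic_orbit_integral_A_nonzero:
  assumes "periodic_orbit A B x" and "nonzero_orbit x"
  shows "integral {0..1} (\<lambda>s. A s * x s ^ 2) \<noteq> 0"
  using weighted_threshold_increasing(2)[of x] assms by (auto simp: periodic_orbit_def)

lemma periodic_orbit_threshold_sign:
  assumes "periodic_orbit A B x" and "nonzero_orbit x" and t: "t \<in> {0..1}"
  shows "(b * x t - a) * (b * x 0 - a) > 0"
proof -
  have x: "abel_sol A B x" and "x 1 = x 0"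
    using assms(1) by (auto simp: periodic_orbit_def)
  define I where "I t = exp (- integral {0..t} (\<lambda>s. A s * x s ^ 2))" for t
  have "I t > 0" for t
    by (simp add: I_def)
  have Z_mono: "(b * x s - a) * I s \<le> (b * x u - a) * I u" if "0 \<le> s" "s \<le> u" "u \<le> 1" for s u
    using weighted_threshold_increasing(1)[OF x assms(2) that] by (simp add: I_def)
  have Z_less: "b * x 0 - a < (b * x 0 - a) * I 1"
    using weighted_threshold_increasing(2)[OF x assms(2)] \<open>x 1 = x 0\<close> by (simp add: I_def)
  show ?thesis
  proof (cases "b * x 0 - a > 0")
    case True
    then have "(b * x t - a) * I t > 0"
      using Z_mono[of 0 t] t by (simp add: I_def)
    with True \<open>I t > 0\<close> show ?thesis
      by (simp add: zero_less_mult_iff)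
  next
    case False
    moreover have "b * x 0 - a \<noteq> 0"
      using Z_less by auto
    ultimately have "b * x 0 - a < 0"
      by simp
    have "(b * x t - a) * I t \<le> (b * x 1 - a) * I 1"
      using Z_mono[of t 1] t by simp
    also have "\<dots> < 0"
      using \<open>b * x 0 - a < 0\<close> \<open>I 1 > 0\<close> \<open>x 1 = x 0\<close> by (simp add: mult_neg_pos)
    finally show ?thesis
      using \<open>b * x 0 - a < 0\<close> \<open>I t > 0\<close> by (simp add: mult_less_0_iff zero_less_mult_iff)
  qed
qed

lemma nonzero_periodic_orbit_unique:
  assumes x: "periodic_orbit A B x" "nonzero_orbit x" and y: "periodic_orbit A B y" "nonzero_orbit y"
    and t: "t \<in> {0..1}"
  shows "x t = y t"
proof (rule ccontr)
  assume "x t \<noteq> y t"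
  have x_sol: "abel_sol A B x" and "x 1 = x 0" and y_sol: "abel_sol A B y" and "y 1 = y 0"
    using x(1) y(1) by (auto simp: periodic_orbit_def)
  then have "y 0 - x 0 \<noteq> 0"
    using abel_sol_unique[OF x_sol y_sol _ t] \<open>x t \<noteq> y t\<close> by auto
  define q where "q s = (y s - x s) / ((b * x s - a) * (b * y s - a))" for s
  have q_sign: "q s * q 0 > 0" if s: "s \<in> {0..1}" for s
  proof -
    have "(y s - x s) * (y 0 - x 0) = (y 0 - x 0)\<^sup>2 * exp (integral {0..s} (abel_secant A B x y))"
      using abel_sol_diff[OF x_sol y_sol s] by (simp add: power2_eq_square)
    then have "(y s - x s) * (y 0 - x 0) > 0"
      using \<open>y 0 - x 0 \<noteq> 0\<close> by simp
    moreover have "(b * x s - a) * (b * x 0 - a) > 0" "(b * y s - a) * (b * y 0 - a) > 0"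
      using periodic_orbit_threshold_sign[OF x s] periodic_orbit_threshold_sign[OF y s] .
    moreover have "q s * q 0 = ((y s - x s) * (y 0 - x 0)) /
        (((b * x s - a) * (b * x 0 - a)) * ((b * y s - a) * (b * y 0 - a)))"
      unfolding q_def by (simp add: field_simps)
    ultimately show ?thesis
      by simp
  qed
  define D where "D s = q 0 * (recip_cubic_primitive a b (x s) - recip_cubic_primitive a b (y s))" for s
  have D_deriv: "(D has_real_derivative q 0 * ((a * A s + b * B s) * q s)) (at s within {0..1})"
    if s: "s \<in> {0..1}" for s
    unfolding D_def q_def
    using nonzero_orbit_nonvanishing[OF x_sol x(2) s] nonzero_orbit_nonvanishing[OF y_sol y(2) s]
      periodic_orbit_threshold_sign[OF x s] periodic_orbit_threshold_sign[OF y s]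
    by (intro DERIV_cmult abel_sols_recip_cubic_primitive_diff_deriv x_sol y_sol s) auto
  have D_deriv_nonneg: "q 0 * ((a * A s + b * B s) * q s) \<ge> 0" if s: "s \<in> {0..1}" for s
  proof -
    have "q 0 * ((a * A s + b * B s) * q s) = (a * A s + b * B s) * (q s * q 0)"
      by (simp only: mult_ac)
    also have "\<dots> \<ge> 0"
      using combination_nonneg[OF s] q_sign[OF s] by simp
    finally show ?thesis .
  qed
  obtain t0 where t0: "t0 \<in> {0..1}" "a * A t0 + b * B t0 \<noteq> 0"
    using combination_nonzero by blast
  moreover have "q 0 * ((a * A t0 + b * B t0) * q t0) \<noteq> 0"
    using q_sign[OF t0(1)] t0(2) by auto
  ultimately have "D 0 < D 1"
    by (intro deriv_nonneg_imp_less_Icc[OF D_deriv D_deriv_nonneg, of t0]) auto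
  moreover have "D 1 = D 0"
    by (simp add: D_def \<open>x 1 = x 0\<close> \<open>y 1 = y 0\<close>)
  ultimately show False
    by simp
qed

lemma nonzero_periodic_orbit_hyperbolic:
  assumes "periodic_orbit A B x" and "nonzero_orbit x"
  shows "hyperbolic A B (x 0)"
proof -
  have x: "abel_sol A B x"
    using assms(1) by (simp add: periodic_orbit_def)
  have "(\<lambda>s. A s * x s ^ 2) integrable_on {0..1}"
    "(\<lambda>s. 2 * (A s * x s ^ 2 + B s * x s)) integrable_on {0..1}"
    using abel_sol_continuous_on[OF x]
    by (auto intro!: integrable_continuous_interval continuous_intros continuous_A continuous_B)
  moreover have "abel_secant A B x x = (\<lambda>s. A s * x s ^ 2 + 2 * (A s * x s ^ 2 + B s * x s))"
    by (auto simp: abel_secant_def algebra_simps power2_eq_square)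
  ultimately have "integral {0..1} (abel_secant A B x x)
      = integral {0..1} (\<lambda>s. A s * x s ^ 2) + integral {0..1} (\<lambda>s. 2 * (A s * x s ^ 2 + B s * x s))"
    by (simp only: Henstock_Kurzweil_Integration.integral_add)
  also have "\<dots> = integral {0..1} (\<lambda>s. A s * x s ^ 2) + 2 * integral {0..1} (\<lambda>s. A s * x s ^ 2 + B s * x s)"
    by (simp only: Henstock_Kurzweil_Integration.integral_mult_right)
  also have "\<dots> = integral {0..1} (\<lambda>s. A s * x s ^ 2)"
    using periodic_orbit_integral_eq_0[OF assms] by simp
  finally have "exp (integral {0..1} (abel_secant A B x x)) \<noteq> 1"
    using periodic_orbit_integral_A_nonzero[OF assms] by simp
  with poincare_has_real_derivative[OF x] show ?thesis
    unfolding hyperbolic_def by blast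
qed

end

lemma abel_sign_condition_if_no_sign_change:
  assumes "abel_equation A B" and nonzero: "\<exists>t\<in>{0..1}. a * A t + b * B t \<noteq> 0"
    and "(\<forall>t\<in>{0..1}. a * A t + b * B t \<ge> 0) \<or> (\<forall>t\<in>{0..1}. a * A t + b * B t \<le> 0)"
  shows "abel_sign_condition A B a b \<or> abel_sign_condition A B (- a) (- b)"
  using assms(3)
proof
  assume "\<forall>t\<in>{0..1}. a * A t + b * B t \<ge> 0"
  with assms(1) nonzero show ?thesis
    by (simp add: abel_sign_condition_def abel_sign_condition_axioms_def)
next
  assume nonpos: "\<forall>t\<in>{0..1}. a * A t + b * B t \<le> 0"
  have "(- a) * A t + (- b) * B t = - (a * A t + b * B t)" for t
    by simp
  then have "abel_sign_condition A B (- a) (- b)"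
    using assms(1) nonzero nonpos
    unfolding abel_sign_condition_def abel_sign_condition_axioms_def
    by (metis neg_0_le_iff_le neg_equal_0_iff_equal)
  then show ?thesis ..
qed

theorem theoremA:
  fixes A B :: "real \<Rightarrow> real" and a b :: real
  assumes "smooth01 A" and "smooth01 B"
    and "\<exists>t\<in>{0..1}. a * A t + b * B t \<noteq> 0"
    and "(\<forall>t\<in>{0..1}. a * A t + b * B t \<ge> 0) \<or> (\<forall>t\<in>{0..1}. a * A t + b * B t \<le> 0)"
  shows "(\<forall>x y. periodic_orbit A B x \<and> nonzero_orbit x \<and> periodic_orbit A B y \<and> nonzero_orbit y
            \<longrightarrow> (\<forall>t\<in>{0..1}. x t = y t))
       \<and> (\<forall>x. periodic_orbit A B x \<and> nonzero_orbit x \<longrightarrow> hyperbolic A B (x 0))"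
proof -
  have "abel_equation A B"
    using assms(1,2) by unfold_locales (simp_all add: smooth01_continuous_on)
  then obtain a' b' where "abel_sign_condition A B a' b'"
    using abel_sign_condition_if_no_sign_change assms(3,4) by blast
  then interpret abel_sign_condition A B a' b' .
  show ?thesis
    using nonzero_periodic_orbit_unique nonzero_periodic_orbit_hyperbolic by blast
qed

end
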